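(* For any $a\in\mathbb R$ and $\beta\in\mathbb S^1$, let $t_0=-\log\sqrt{1+a^2}$ and $s=\frac{-a}{\sqrt{1+a^2}+1}=-\tan\big(\tfrac12\tan^{-1}a\big)$. Then $$\gamma_{\beta,a}(t+t_0)=\gamma^{\mathrm v}_{\beta+\pi/2-2\tan^{-1}s,\ s}(t)\qquad\text{for all }t\in\mathbb R.$$
   Context: Horocyclic parameterization: $\gamma_{\beta,a}(t)=e^{i\beta}\frac{(2+ia)\tanh(t/2)+ia}{ia\tanh(t/2)-2+ia}$, $(\beta,a,t)\in\mathbb S^1\times\mathbb R\times\mathbb R$. Vertex parameterization: $\gamma^{\mathrm v}_{\omega,s}(t)=e^{i\omega}\frac{s+i\tanh(t/2)}{1+is\tanh(t/2)}$, $(\omega,s)\in\mathbb S^1\times(-1,1)$, $t\in\mathbb R$. Both are unit-speed geodesics of the Poincaré metric $g_H=\frac{4|dz|^2}{(1-|z|^2)^2}$ on the open unit disk. *)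

theory Defs
  imports "HOL-Analysis.Analysis"
begin

text \<open>Horocyclic parameterization; the angle beta in S^1 is represented by a real number.\<close>
definition gamma_h :: "real \<Rightarrow> real \<Rightarrow> real \<Rightarrow> complex" where
  "gamma_h \<beta> a t =
     cis \<beta> * (((2 + \<i> * of_real a) * of_real (tanh (t/2)) + \<i> * of_real a) /
               (\<i> * of_real a * of_real (tanh (t/2)) - 2 + \<i> * of_real a))"

text \<open>Vertex parameterization, for omega in S^1 (a real angle) and s in (-1,1).\<close>
definition gamma_v :: "real \<Rightarrow> real \<Rightarrow> real \<Rightarrow> complex" where
  "gamma_v \<omega> s t =
     cis \<omega> * ((of_real s + \<i> * of_real (tanh (t/2))) /
               (1 + \<i> * of_real s * of_real (tanh (t/2))))"

end

theory Submission
  imports Defs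
begin

(* With F = exp (- t) one has tanh (t / 2) = (1 - F) / (1 + F), so both parameterizations are
   Moebius transformations of F, and the time shift by t0 multiplies F by r = sqrt (1 + a^2).
   Writing u = 1 - i s and v = 1 + i s, the choice of s makes u a square root of 1 + i a up to
   the positive factor (r + 1) / 2, and r = ((r + 1) / 2) u v.  Substituting these turns the
   horocyclic Moebius map into the vertex one times the unimodular factor u / v, and
   u / v = cis (- 2 arctan s) is absorbed by the change of angle. *)

lemma tanh_half_exp: "tanh (x / 2) = (1 - exp (- x)) / (1 + exp (- x))" for x :: real
  using tanh_real_altdef[of "x / 2"] by simp

lemma moebius_of_cayley:
  fixes p q m n E :: "'a :: field"
  assumes "1 + E \<noteq> 0"
  shows "(p * ((1 - E) / (1 + E)) + q) / (m * ((1 - E) / (1 + E)) + n)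
       = (p + q + (q - p) * E) / (m + n + (n - m) * E)"
proof -
  have "(1 + E) * (p * ((1 - E) / (1 + E)) + q) = p + q + (q - p) * E"
       "(1 + E) * (m * ((1 - E) / (1 + E)) + n) = m + n + (n - m) * E"
    using assms by (simp_all add: field_simps)
  then show ?thesis
    by (metis assms mult_divide_mult_cancel_left)
qed

lemma gamma_h_altdef:
  "gamma_h \<beta> a x =
     - cis \<beta> * ((1 + \<i> * a - of_real (exp (- x))) / (1 - \<i> * a + of_real (exp (- x))))"
proof -
  define E where "E = complex_of_real (exp (- x))"
  have E: "1 + E \<noteq> 0"
    using add_pos_pos[OF zero_less_one exp_gt_zero[of "- x"]] unfolding E_def
    by (simp add: complex_eq_iff)
  have "gamma_h \<beta> a x
      = cis \<beta> * (((2 + \<i> * a) * ((1 - E) / (1 + E)) + \<i> * a) /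
                    (\<i> * a * ((1 - E) / (1 + E)) + (\<i> * a - 2)))"
    unfolding gamma_h_def tanh_half_exp E_def by (simp add: algebra_simps)
  also have "\<dots> = cis \<beta> * ((2 * (1 + \<i> * a - E)) / (2 * - (1 - \<i> * a + E)))"
    unfolding moebius_of_cayley[OF E]
    by (intro arg_cong2[where f = "\<lambda>x y. cis \<beta> * (x / y)"]) (simp_all add: algebra_simps)
  also have "\<dots> = - cis \<beta> * ((1 + \<i> * a - E) / (1 - \<i> * a + E))"
    by (simp only: mult_divide_mult_cancel_left_if divide_minus_right mult_minus_right mult_minus_left
        zero_neq_numeral[symmetric] if_False)
  finally show ?thesis
    unfolding E_def .
qed

lemma gamma_v_altdef:
  "gamma_v \<omega> s t = \<i> * cis \<omega> * ((1 - \<i> * s - (1 + \<i> * s) * of_real (exp (- t))) /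
     (1 + \<i> * s + (1 - \<i> * s) * of_real (exp (- t))))"
proof -
  define E where "E = complex_of_real (exp (- t))"
  have E: "1 + E \<noteq> 0"
    using add_pos_pos[OF zero_less_one exp_gt_zero[of "- t"]] unfolding E_def
    by (simp add: complex_eq_iff)
  have "gamma_v \<omega> s t
      = cis \<omega> * ((\<i> * ((1 - E) / (1 + E)) + s) / (\<i> * s * ((1 - E) / (1 + E)) + 1))"
    unfolding gamma_v_def tanh_half_exp E_def by (simp add: algebra_simps)
  also have "\<dots>
      = cis \<omega> * ((\<i> * (1 - \<i> * s - (1 + \<i> * s) * E)) / (1 + \<i> * s + (1 - \<i> * s) * E))"
    unfolding moebius_of_cayley[OF E] by (simp add: algebra_simps)
  finally show ?thesis
    unfolding E_def by simp
qed

lemma cis_2_arctan: "cis (2 * arctan s) = (1 + \<i> * s) / (1 - \<i> * s)"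
proof -
  have "cis (2 * arctan s) = cis (arctan s) ^ 2"
    by (simp only: power2_eq_square cis_mult mult_2)
  also have "cis (arctan s) = (1 + \<i> * s) / sqrt (1 + s\<^sup>2)"
    by (simp add: complex_eq_iff cos_arctan sin_arctan)
  also have "((1 + \<i> * s) / sqrt (1 + s\<^sup>2)) ^ 2 = (1 + \<i> * s)^2 / of_real (1 + s\<^sup>2)"
    by (simp only: power_divide of_real_power[symmetric] real_sqrt_pow2
        add_nonneg_nonneg zero_le_one zero_le_power2)
  also have "complex_of_real (1 + s\<^sup>2) = (1 + \<i> * s) * (1 - \<i> * s)"
    by (simp add: algebra_simps power2_eq_square)
  also have "(1 + \<i> * s)\<^sup>2 / ((1 + \<i> * s) * (1 - \<i> * s)) = (1 + \<i> * s) / (1 - \<i> * s)"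
    by (simp add: power2_eq_square complex_eq_iff)
  finally show ?thesis .
qed

lemma tan_half_arctan: "tan (arctan a / 2) = a / (sqrt (1 + a\<^sup>2) + 1)"
proof -
  have "tan (arctan a / 2) = sin (arctan a) / (cos (arctan a) + 1)"
    using tan_half[of "arctan a / 2"] by simp
  also have "\<dots> = a / (sqrt (1 + a\<^sup>2) + 1)"
    using add_pos_nonneg[OF zero_less_one zero_le_power2[of a]]
    by (simp add: sin_arctan cos_arctan field_simps)
  finally show ?thesis .
qed

lemma one_plus_i_eq_scaled_square:
  fixes a r s :: real
  assumes r_def: "r = sqrt (1 + a\<^sup>2)" and s_def: "s = - a / (r + 1)"
  defines "c \<equiv> complex_of_real ((r + 1) / 2)"
  shows "1 + \<i> * a = c * (1 - \<i> * s)\<^sup>2"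
    and "1 - \<i> * a = c * (1 + \<i> * s)\<^sup>2"
    and "complex_of_real r = c * (1 - \<i> * s) * (1 + \<i> * s)"
proof -
  have r: "r\<^sup>2 = 1 + a\<^sup>2" "r + 1 > 0"
    unfolding r_def by (simp_all add: add_pos_nonneg)
  have s: "(r + 1) * s = - a"
    unfolding s_def using r(2) by simp
  then have "((r + 1) * s)\<^sup>2 = a\<^sup>2"
    by simp
  then have "(r + 1) * ((r + 1) * (1 - s\<^sup>2)) = (r + 1) * 2"
       and "(r + 1) * ((r + 1) * (1 + s\<^sup>2)) = (r + 1) * (2 * r)"
    using r(1) by (simp_all add: power2_eq_square algebra_simps)
  then have "(r + 1) * (1 - s\<^sup>2) = 2" "(r + 1) * (1 + s\<^sup>2) = 2 * r"
    using r(2) by (metis mult_cancel_left less_irrefl)+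
  then have "(r + 1) / 2 * (1 - s\<^sup>2) = 1" "(r + 1) / 2 * (1 + s\<^sup>2) = r"
    and "(r + 1) / 2 * s = - a / 2"
    using s by simp_all
  then have c: "c * (1 - s\<^sup>2) = 1" "c * (1 + s\<^sup>2) = r" "c * s = - a / 2"
    unfolding c_def of_real_mult[symmetric] by (simp_all only: of_real_1)
  have "c * (1 - \<i> * s)\<^sup>2 = c * (1 - s\<^sup>2) - 2 * \<i> * (c * s)"
       "c * (1 + \<i> * s)\<^sup>2 = c * (1 - s\<^sup>2) + 2 * \<i> * (c * s)"
       "c * (1 - \<i> * s) * (1 + \<i> * s) = c * (1 + s\<^sup>2)"
    by (simp_all add: power2_eq_square algebra_simps)
  then show "1 + \<i> * a = c * (1 - \<i> * s)\<^sup>2" "1 - \<i> * a = c * (1 + \<i> * s)\<^sup>2"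
       "complex_of_real r = c * (1 - \<i> * s) * (1 + \<i> * s)"
    unfolding c by simp_all
qed

lemma gamma_h_shift_altdef:
  fixes a s t :: real
  assumes s_def: "s = - a / (sqrt (1 + a\<^sup>2) + 1)"
  defines "F \<equiv> complex_of_real (exp (- t))"
  shows "gamma_h \<beta> a (t - ln (sqrt (1 + a\<^sup>2)))
       = - cis \<beta> * ((1 - \<i> * s) / (1 + \<i> * s))
         * ((1 - \<i> * s - (1 + \<i> * s) * F) / (1 + \<i> * s + (1 - \<i> * s) * F))"
proof -
  define r where "r = sqrt (1 + a\<^sup>2)"
  define c where "c = complex_of_real ((r + 1) / 2)"
  define u v where "u = 1 - \<i> * s" and "v = 1 + \<i> * s"
  have "r > 0"
    unfolding r_def by (simp add: add_pos_nonneg)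
  then have c: "c \<noteq> 0"
    unfolding c_def of_real_eq_0_iff by simp
  have sq: "1 + \<i> * a = c * u\<^sup>2" "1 - \<i> * a = c * v\<^sup>2" "complex_of_real r = c * u * v"
    using one_plus_i_eq_scaled_square[OF r_def, of s] unfolding c_def u_def v_def
    by (simp_all add: s_def r_def)
  have "exp (- (t - ln r)) = r * exp (- t)"
    using \<open>r > 0\<close> by (simp add: exp_diff exp_minus divide_inverse)
  then have "gamma_h \<beta> a (t - ln r) = - cis \<beta> * ((1 + \<i> * a - r * F) / (1 - \<i> * a + r * F))"
    by (simp only: gamma_h_altdef F_def of_real_mult)
  also have "\<dots> = - cis \<beta> * ((c * u * (u - v * F)) / (c * v * (v + u * F)))"
    unfolding sq
    by (intro arg_cong2[where f = "\<lambda>x y. - cis \<beta> * (x / y)"])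
      (simp_all add: power2_eq_square algebra_simps)
  also have "\<dots> = - cis \<beta> * (u / v) * ((u - v * F) / (v + u * F))"
    by (simp only: mult.assoc mult_divide_mult_cancel_left[OF c] times_divide_times_eq)
  finally show ?thesis
    unfolding r_def u_def v_def .
qed

theorem lemma3p7:
  fixes a \<beta> :: real
  defines "t0 \<equiv> - ln (sqrt (1 + a\<^sup>2))"
      and "s \<equiv> - a / (sqrt (1 + a\<^sup>2) + 1)"
  shows "s = - tan (arctan a / 2) \<and>
         (\<forall>t::real. gamma_h \<beta> a (t + t0) = gamma_v (\<beta> + pi/2 - 2 * arctan s) s t)"
proof (intro conjI allI)
  show "s = - tan (arctan a / 2)"
    unfolding s_def tan_half_arctan by simp
next
  fix t :: real
  have shift: "t + t0 = t - ln (sqrt (1 + a\<^sup>2))"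
    unfolding t0_def by simp
  have rotation:
    "- cis \<beta> * ((1 - \<i> * s) / (1 + \<i> * s)) = \<i> * cis (\<beta> + pi/2 - 2 * arctan s)"
    unfolding cis_divide[symmetric] cis_mult[symmetric] cis_2_arctan by (simp add: algebra_simps)
  show "gamma_h \<beta> a (t + t0) = gamma_v (\<beta> + pi/2 - 2 * arctan s) s t"
    by (simp only: shift gamma_h_shift_altdef[OF meta_eq_to_obj_eq[OF s_def]] rotation gamma_v_altdef)
qed

end
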